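(* Let $\boldsymbol Z\sim N(0,\boldsymbol I_d)$ and let $W$ be a discrete random variable (jointly distributed with $\boldsymbol Z$) with $\mathbb P(W=w)<1/2$ for every $w$. Then $$\lambda_{\min}\big(\mathrm{Cov}[\mathbb E(\boldsymbol Z\mid W)]\big)\le 37\,d^{-1}\,\mathrm{Ent}(W).$$ In particular, if the support of $W$ has $K$ elements, then $\lambda_{\min}(\mathrm{Cov}[\mathbb E(\boldsymbol Z\mid W)])\le 37\,d^{-1}\log K$.
   Context: $\mathrm{Ent}(W)=\sum_w\mathbb P(W=w)\log\frac1{\mathbb P(W=w)}$. *)

theory Defs
  imports "HOL-Probability.Probability"
begin

definition lambda_min :: "real^'n^'n \<Rightarrow> real" where
  "lambda_min A = Min {l. \<exists>v::real^'n. v \<noteq> 0 \<and> A *v v = l *\<^sub>R v}"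

definition sigma_of :: "'a measure \<Rightarrow> ('a \<Rightarrow> 'w) \<Rightarrow> 'a measure" where
  "sigma_of M W = vimage_algebra (space M) W (count_space UNIV)"

definition cond_exp_vec :: "'a measure \<Rightarrow> ('a \<Rightarrow> 'w) \<Rightarrow> ('a \<Rightarrow> real^'d) \<Rightarrow> 'a \<Rightarrow> real^'d" where
  "cond_exp_vec M W Z = (\<lambda>\<omega>. \<chi> i. real_cond_exp M (sigma_of M W) (\<lambda>x. Z x $ i) \<omega>)"

definition cov_matrix :: "'a measure \<Rightarrow> ('a \<Rightarrow> real^'d) \<Rightarrow> real^'d^'d" where
  "cov_matrix M Y = (\<chi> i j. \<integral>\<omega>. (Y \<omega> $ i - (\<integral>x. Y x $ i \<partial>M)) * (Y \<omega> $ j - (\<integral>x. Y x $ j \<partial>M)) \<partial>M)"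

definition discrete_entropy :: "'a measure \<Rightarrow> ('a \<Rightarrow> 'w) \<Rightarrow> ennreal" where
  "discrete_entropy M W = (\<integral>\<^sup>+ w. ennreal (measure M {\<omega>\<in>space M. W \<omega> = w} *
       ln (1 / measure M {\<omega>\<in>space M. W \<omega> = w})) \<partial>count_space UNIV)"

definition support_rv :: "'a measure \<Rightarrow> ('a \<Rightarrow> 'w) \<Rightarrow> 'w set" where
  "support_rv M W = {w. measure M {\<omega>\<in>space M. W \<omega> = w} > 0}"

end

theory Submission
  imports Defs
begin

text \<open>
  For any function \<open>a\<close> of \<open>W\<close>, the Gaussian identity \<open>E exp(a \<bullet> Z - |a|\<^sup>2/2) = 1\<close>,
  applied on each event \<open>{W = w}\<close>, gives
  \<open>E exp(a(W) \<bullet> Z - |a(W)|\<^sup>2/2 - ln (1 / P(W = w))|\<^bsub>w = W\<^esub>) \<le> \<Sum>\<^sub>w P(W = w) = 1\<close>,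
  and \<open>x \<le> e\<^sup>x - 1\<close> turns this into \<open>E[a(W) \<bullet> Z] - E|a(W)|\<^sup>2/2 \<le> Ent(W)\<close>.
  The conditional expectation \<open>Y = E(Z | W)\<close> is a function of \<open>W\<close> with \<open>E[Y \<bullet> Z] = E|Y|\<^sup>2\<close>,
  so \<open>E|Y|\<^sup>2 \<le> 2 Ent(W)\<close>. Since the smallest eigenvalue of a symmetric matrix is at most each
  diagonal entry, \<open>d \<lambda>\<^sub>m\<^sub>i\<^sub>n(Cov Y) \<le> tr Cov Y \<le> E|Y|\<^sup>2\<close>. This gives the constant 2 instead
  of 37 and does not need the hypothesis \<open>P(W = w) < 1/2\<close>.
\<close>

lemma quadratic_nonneg_imp_linear_coeff_zero:
  fixes b c :: real
  assumes nonneg: "\<And>t. 0 \<le> 2 * t * b + t\<^sup>2 * c"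
  shows "b = 0"
proof -
  have "c \<ge> 0" using nonneg[of 1] nonneg[of "-1"] by simp
  define t where "t = - b / (c + 1)"
  have tc: "t * (c + 1) = - b" using \<open>c \<ge> 0\<close> by (simp add: t_def)
  have "0 \<le> (2 * t * b + t\<^sup>2 * c) * (c + 1)\<^sup>2" using nonneg by simp
  also have "\<dots> = 2 * b * (t * (c + 1)) * (c + 1) + c * (t * (c + 1))\<^sup>2"
    by (simp add: power2_eq_square algebra_simps)
  also have "\<dots> = - b\<^sup>2 * (c + 2)" unfolding tc by (simp add: power2_eq_square algebra_simps)
  finally show "b = 0" using \<open>c \<ge> 0\<close> by (simp add: mult_le_0_iff)
qed

lemma inner_symmetric_matrix_vector_mult:
  fixes C :: "real^'n^'n"
  assumes "transpose C = C"
  shows "x \<bullet> (C *v y) = y \<bullet> (C *v x)"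
  by (metis assms dot_lmul_matrix inner_commute transpose_matrix_vector)

lemma psd_matrix_null_quadratic_imp_null:
  fixes D :: "real^'n^'n"
  assumes sym: "transpose D = D" and psd: "\<And>x. 0 \<le> x \<bullet> (D *v x)"
    and null: "v \<bullet> (D *v v) = 0"
  shows "D *v v = 0"
proof -
  define r where "r = D *v v"
  have "0 \<le> 2 * t * (r \<bullet> r) + t\<^sup>2 * (r \<bullet> (D *v r))" for t
  proof -
    have "(v + t *\<^sub>R r) \<bullet> (D *v (v + t *\<^sub>R r))
        = v \<bullet> (D *v v) + 2 * t * (r \<bullet> (D *v v)) + t\<^sup>2 * (r \<bullet> (D *v r))"
      using inner_symmetric_matrix_vector_mult[OF sym, of v r]
      by (simp add: algebra_simps inner_add_left inner_add_right power2_eq_square)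
    then show ?thesis using psd[of "v + t *\<^sub>R r"] null by (simp add: r_def)
  qed
  then have "r \<bullet> r = 0" by (rule quadratic_nonneg_imp_linear_coeff_zero)
  then show ?thesis by (simp add: r_def)
qed

lemma finite_eigenvalues_symmetric_matrix:
  fixes C :: "real^'n^'n"
  assumes sym: "transpose C = C"
  shows "finite {l. \<exists>v. v \<noteq> 0 \<and> C *v v = l *\<^sub>R v}" (is "finite ?E")
proof -
  define g where "g l = (SOME v. v \<noteq> 0 \<and> C *v v = l *\<^sub>R v)" for l
  have g: "g l \<noteq> 0 \<and> C *v g l = l *\<^sub>R g l" if "l \<in> ?E" for l
    using that unfolding g_def by (metis (mono_tags, lifting) mem_Collect_eq someI_ex)
  have orth: "g l \<bullet> g m = 0" if "l \<in> ?E" "m \<in> ?E" "l \<noteq> m" for l m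
  proof -
    have "l * (g l \<bullet> g m) = g m \<bullet> (C *v g l)" using g[OF that(1)] by (simp add: inner_commute)
    also have "\<dots> = g l \<bullet> (C *v g m)" by (rule inner_symmetric_matrix_vector_mult[OF sym])
    also have "\<dots> = m * (g l \<bullet> g m)" using g[OF that(2)] by simp
    finally show ?thesis using that(3) by simp
  qed
  have "inj_on g ?E"
  proof (rule inj_onI)
    fix l m assume "l \<in> ?E" "m \<in> ?E" "g l = g m"
    then show "l = m" using orth[of l m] g[of l] by auto
  qed
  moreover have "0 \<notin> g ` ?E" using g by force
  then have "independent (g ` ?E)"
    using orth by (intro pairwise_orthogonal_independent) (auto simp: pairwise_def orthogonal_def)
  ultimately show ?thesis using finiteI_independent finite_imageD by blast
qed

lemma symmetric_matrix_has_rayleigh_eigenvector: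
  fixes C :: "real^'n^'n"
  assumes sym: "transpose C = C"
  obtains v where "norm v = 1" "C *v v = (v \<bullet> (C *v v)) *\<^sub>R v"
    and "\<And>u. norm u = 1 \<Longrightarrow> v \<bullet> (C *v v) \<le> u \<bullet> (C *v u)"
proof -
  have "continuous_on (sphere 0 1) (\<lambda>v. v \<bullet> (C *v v))"
    by (intro continuous_intros matrix_vector_mult_linear_continuous_on[THEN continuous_on_subset]) auto
  moreover have "sphere (0::real^'n) 1 \<noteq> {}" by simp
  ultimately obtain v where v: "v \<in> sphere 0 1"
    and min: "\<And>u. u \<in> sphere 0 1 \<Longrightarrow> v \<bullet> (C *v v) \<le> u \<bullet> (C *v u)"
    using continuous_attains_inf[OF compact_sphere] by blast
  define \<mu> where "\<mu> = v \<bullet> (C *v v)"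
  define D where "D = C - \<mu> *\<^sub>R mat 1"
  have Dx: "D *v x = C *v x - \<mu> *\<^sub>R x" for x
    by (simp add: D_def matrix_vector_mult_diff_rdistrib scaleR_matrix_vector_assoc[symmetric])
  have "0 \<le> x \<bullet> (D *v x)" for x
  proof (cases "x = 0")
    case False
    define u where "u = (1 / norm x) *\<^sub>R x"
    have "norm u = 1" using False by (simp add: u_def)
    then have "\<mu> \<le> u \<bullet> (C *v u)" using min by (simp add: \<mu>_def)
    also have "\<dots> = x \<bullet> (C *v x) / (norm x)\<^sup>2"
      by (simp add: u_def matrix_vector_mult_scaleR power2_eq_square)
    finally have "\<mu> * (norm x)\<^sup>2 \<le> x \<bullet> (C *v x)" using False by (simp add: field_simps)
    then show ?thesis by (simp add: Dx inner_diff_right power2_norm_eq_inner)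
  qed simp
  moreover have "v \<bullet> (D *v v) = 0" using v by (simp add: Dx inner_diff_right \<mu>_def dot_square_norm)
  moreover have "transpose D = D" using sym by (simp add: D_def vec_eq_iff transpose_def mat_def)
  ultimately have "D *v v = 0" by (intro psd_matrix_null_quadratic_imp_null)
  then have "C *v v = \<mu> *\<^sub>R v" by (simp add: Dx)
  then show ?thesis using v min by (intro that) (auto simp: \<mu>_def)
qed

lemma lambda_min_le_diagonal:
  fixes C :: "real^'n^'n"
  assumes sym: "transpose C = C"
  shows "lambda_min C \<le> C $ k $ k"
proof -
  obtain v where v: "norm v = 1" "C *v v = (v \<bullet> (C *v v)) *\<^sub>R v"
    and min: "\<And>u. norm u = 1 \<Longrightarrow> v \<bullet> (C *v v) \<le> u \<bullet> (C *v u)"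
    using symmetric_matrix_has_rayleigh_eigenvector[OF sym] by blast
  have "lambda_min C \<le> v \<bullet> (C *v v)"
    unfolding lambda_min_def using v finite_eigenvalues_symmetric_matrix[OF sym]
    by (intro Min_le) (auto intro!: exI[of _ v])
  also have "\<dots> \<le> axis k 1 \<bullet> (C *v axis k 1)" by (rule min) simp
  also have "\<dots> = C $ k $ k"
    by (simp add: inner_axis' matrix_vector_mult_basis column_def)
  finally show ?thesis .
qed

lemma entropy_sum_le_ln_card:
  fixes p :: "'w \<Rightarrow> real"
  assumes fin: "finite K" and pos: "\<And>w. w \<in> K \<Longrightarrow> 0 < p w" and sum1: "(\<Sum>w\<in>K. p w) = 1"
  shows "(\<Sum>w\<in>K. p w * ln (1 / p w)) \<le> ln (real (card K))"
proof -
  define k where "k = real (card K)"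
  have "K \<noteq> {}" using sum1 by auto
  then have k: "k > 0" using fin by (simp add: k_def card_gt_0_iff)
  have "(\<Sum>w\<in>K. p w * ln (1 / p w)) - ln k = (\<Sum>w\<in>K. p w * (ln (1 / p w) - ln k))"
    using sum1 by (simp add: sum_subtractf sum_distrib_right[symmetric] right_diff_distrib)
  also have "\<dots> = (\<Sum>w\<in>K. p w * ln (1 / (p w * k)))"
    using pos k by (intro sum.cong) (simp_all add: ln_div ln_mult)
  also have "\<dots> \<le> (\<Sum>w\<in>K. p w * (1 / (p w * k) - 1))"
    using pos k by (intro sum_mono mult_left_mono ln_le_minus_one) (auto intro: less_imp_le)
  also have "\<dots> = (\<Sum>w\<in>K. 1 / k - p w)"
    using k by (intro sum.cong refl) (auto simp: field_simps dest!: pos)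
  also have "\<dots> = 0" using sum1 k by (simp add: sum_subtractf k_def)
  finally show ?thesis by (simp add: k_def)
qed

lemma (in prob_space) integral_nonpos_if_nn_integral_exp_le_1:
  fixes X :: "'a \<Rightarrow> real"
  assumes X: "integrable M X" and exp_le: "(\<integral>\<^sup>+x. ennreal (exp (X x)) \<partial>M) \<le> 1"
  shows "(\<integral>x. X x \<partial>M) \<le> 0"
proof -
  have [measurable]: "X \<in> borel_measurable M" using X by auto
  have exp_X: "integrable M (\<lambda>x. exp (X x))"
    using exp_le by (intro integrableI_nonneg) (auto simp: le_less_trans)
  have "ennreal (\<integral>x. exp (X x) \<partial>M) \<le> 1"
    using nn_integral_eq_integral[OF exp_X] exp_le by simp
  then have "(\<integral>x. exp (X x) \<partial>M) \<le> 1" by (simp add: ennreal_le_1)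
  moreover have "(\<integral>x. X x \<partial>M) \<le> (\<integral>x. exp (X x) - 1 \<partial>M)"
    using X exp_X exp_ge_add_one_self by (intro integral_mono) (auto simp: algebra_simps)
  ultimately show ?thesis using exp_X by (simp add: prob_space)
qed

lemma (in prob_space) variance_le_second_moment:
  fixes X :: "'a \<Rightarrow> real"
  assumes "integrable M X" and "integrable M (\<lambda>x. (X x)\<^sup>2)"
  shows "variance X \<le> expectation (\<lambda>x. (X x)\<^sup>2)"
  using variance_eq[OF assms] by simp

lemma sets_sigma_of: "sets (sigma_of M W) = {W -` B \<inter> space M | B. B \<in> sets (count_space UNIV)}"
  unfolding sigma_of_def by (rule sets_vimage_algebra2) auto

lemma measurable_sigma_of_constant_on_fibres:
  fixes f :: "'a \<Rightarrow> real"
  assumes "f \<in> borel_measurable (sigma_of M W)"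
    and "\<omega> \<in> space M" "\<omega>' \<in> space M" "W \<omega> = W \<omega>'"
  shows "f \<omega> = f \<omega>'"
proof -
  have "f -` {f \<omega>} \<inter> space (sigma_of M W) \<in> sets (sigma_of M W)"
    using assms(1) by (rule measurable_sets) simp
  then obtain B where B: "f -` {f \<omega>} \<inter> space M = W -` B \<inter> space M"
    unfolding sets_sigma_of by (auto simp: sigma_of_def)
  have "\<omega> \<in> f -` {f \<omega>} \<inter> space M" using assms(2) by simp
  then have "\<omega>' \<in> W -` B \<inter> space M" using B assms(3,4) by auto
  then have "\<omega>' \<in> f -` {f \<omega>} \<inter> space M" by (simp only: B)
  then show ?thesis by simp
qed

lemma std_normal_density_vec_shift:
  fixes a x :: "real^'d"
  shows "(\<Prod>i\<in>UNIV. std_normal_density (x $ i)) * exp (a \<bullet> x - a \<bullet> a / 2)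
       = (\<Prod>i\<in>UNIV. std_normal_density ((x - a) $ i))"
proof -
  have "exp (a \<bullet> x - a \<bullet> a / 2) = (\<Prod>i\<in>UNIV. exp (a$i * x$i - a$i * a$i / 2))"
    by (simp add: inner_vec_def exp_sum[symmetric] sum_subtractf sum_divide_distrib)
  moreover have "std_normal_density (x $ i) * exp (a$i * x$i - a$i * a$i / 2)
      = std_normal_density ((x - a) $ i)" for i
    by (simp add: normal_density_def exp_add[symmetric] power2_eq_square algebra_simps diff_divide_distrib)
  ultimately show ?thesis by (simp add: prod.distrib[symmetric])
qed

lemma nn_integral_std_normal_exp_tilt:
  fixes Z :: "'a \<Rightarrow> real^'d" and a :: "real^'d"
  assumes "prob_space M"
    and D: "distributed M lborel Z (\<lambda>x. ennreal (\<Prod>i\<in>UNIV. std_normal_density (x $ i)))"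
  shows "(\<integral>\<^sup>+\<omega>. ennreal (exp (a \<bullet> Z \<omega> - a \<bullet> a / 2)) \<partial>M) = 1"
proof -
  define g where "g x = (\<Prod>i\<in>UNIV. std_normal_density (x $ i))" for x :: "real^'d"
  have [measurable]: "g \<in> borel_measurable borel" unfolding g_def by measurable
  have g_nonneg: "0 \<le> g x" for x unfolding g_def by (simp add: prod_nonneg)
  have "(\<integral>\<^sup>+\<omega>. ennreal (exp (a \<bullet> Z \<omega> - a \<bullet> a / 2)) \<partial>M)
      = (\<integral>\<^sup>+x. ennreal (g x) * ennreal (exp (a \<bullet> x - a \<bullet> a / 2)) \<partial>lborel)"
    using distributed_nn_integral[OF D, of "\<lambda>x. ennreal (exp (a \<bullet> x - a \<bullet> a / 2))"]
    by (simp add: g_def)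
  also have "\<dots> = (\<integral>\<^sup>+x. ennreal (g (x - a)) \<partial>lborel)"
    using std_normal_density_vec_shift[of _ a] g_nonneg by (simp add: g_def ennreal_mult[symmetric])
  also have "\<dots> = (\<integral>\<^sup>+x. ennreal (g x) \<partial>distr lborel borel ((+) (-a)))"
    by (simp add: nn_integral_distr)
  also have "\<dots> = (\<integral>\<^sup>+x. ennreal (g x) * 1 \<partial>lborel)"
    by (simp add: lborel_distr_plus)
  also have "\<dots> = (\<integral>\<^sup>+\<omega>. 1 \<partial>M)"
    using distributed_nn_integral[OF D, of "\<lambda>x. 1"] by (simp add: g_def)
  also have "\<dots> = 1" using assms(1) by (simp add: prob_space.emeasure_space_1)
  finally show ?thesis .
qed

locale discrete_random_variable = prob_space M for M :: "'a measure" +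
  fixes W :: "'a \<Rightarrow> 'w"
  assumes measurable_W [measurable]: "W \<in> measurable M (count_space UNIV)"
    and countable_values: "countable (W ` space M)"
begin

definition p :: "'w \<Rightarrow> real" where
  "p w = prob {\<omega>\<in>space M. W \<omega> = w}"

lemma p_nonneg [simp]: "0 \<le> p w"
  by (simp add: p_def)

lemma ln_inverse_p_nonneg: "0 \<le> ln (1 / p w)"
proof (cases "p w = 0")
  case False
  then have "0 < p w" "p w \<le> 1" by (auto simp: p_def less_le)
  then show ?thesis by (simp add: ln_div)
qed simp

lemma borel_measurable_comp_W [measurable]: "(\<lambda>\<omega>. f (W \<omega>)) \<in> borel_measurable M"
  by (rule measurable_compose[OF measurable_W]) simp

lemma nn_integral_split_by_value:
  fixes f :: "'w \<Rightarrow> 'a \<Rightarrow> ennreal"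
  assumes [measurable]: "\<And>w. f w \<in> borel_measurable M"
  shows "(\<integral>\<^sup>+\<omega>. f (W \<omega>) \<omega> \<partial>M)
       = (\<integral>\<^sup>+w. (\<integral>\<^sup>+\<omega>. f w \<omega> * indicator {\<omega>\<in>space M. W \<omega> = w} \<omega> \<partial>M) \<partial>count_space UNIV)"
proof -
  let ?S = "W ` space M"
  have "(\<integral>\<^sup>+\<omega>. f (W \<omega>) \<omega> \<partial>M)
      = (\<integral>\<^sup>+\<omega>. (\<integral>\<^sup>+w. f w \<omega> * indicator {\<omega>\<in>space M. W \<omega> = w} \<omega> \<partial>count_space ?S) \<partial>M)"
  proof (rule nn_integral_cong)
    fix \<omega> assume \<omega>: "\<omega> \<in> space M"
    have "(\<integral>\<^sup>+w. f w \<omega> * indicator {\<omega>\<in>space M. W \<omega> = w} \<omega> \<partial>count_space ?S)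
        = (\<integral>\<^sup>+w. f w \<omega> * indicator {W \<omega>} w \<partial>count_space ?S)"
      using \<omega> by (intro nn_integral_cong) (auto simp: indicator_def)
    then show "f (W \<omega>) \<omega> = (\<integral>\<^sup>+w. f w \<omega> * indicator {\<omega>\<in>space M. W \<omega> = w} \<omega> \<partial>count_space ?S)"
      using \<omega> by simp
  qed
  also have "\<dots> = (\<integral>\<^sup>+w. (\<integral>\<^sup>+\<omega>. f w \<omega> * indicator {\<omega>\<in>space M. W \<omega> = w} \<omega> \<partial>M) \<partial>count_space ?S)"
    by (rule nn_integral_count_space_nn_integral[OF countable_values]) measurable
  also have "\<dots> = (\<integral>\<^sup>+w. (\<integral>\<^sup>+\<omega>. f w \<omega> * indicator {\<omega>\<in>space M. W \<omega> = w} \<omega> \<partial>M) \<partial>count_space UNIV)"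
  proof -
    have "(\<integral>\<^sup>+\<omega>. f w \<omega> * indicator {\<omega>\<in>space M. W \<omega> = w} \<omega> \<partial>M) = (\<integral>\<^sup>+\<omega>. 0 \<partial>M)"
      if "w \<notin> ?S" for w
      using that by (intro nn_integral_cong) (auto simp: indicator_def)
    then show ?thesis
      by (subst nn_integral_count_space_indicator) (auto intro!: nn_integral_cong simp: indicator_def)
  qed
  finally show ?thesis .
qed

lemma nn_integral_comp_W:
  "(\<integral>\<^sup>+\<omega>. g (W \<omega>) \<partial>M) = (\<integral>\<^sup>+w. ennreal (p w) * g w \<partial>count_space UNIV)"
  using nn_integral_split_by_value[of "\<lambda>w _. g w"]
  by (simp add: nn_integral_cmult_indicator p_def emeasure_eq_measure mult.commute)

lemma nn_integral_p: "(\<integral>\<^sup>+w. ennreal (p w) \<partial>count_space UNIV) = 1"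
  using nn_integral_comp_W[of "\<lambda>_. 1"] by (simp add: emeasure_space_1)

lemma discrete_entropy_eq_nn_integral:
  "discrete_entropy M W = (\<integral>\<^sup>+\<omega>. ennreal (ln (1 / p (W \<omega>))) \<partial>M)"
  unfolding nn_integral_comp_W[of "\<lambda>w. ennreal (ln (1 / p w))"] discrete_entropy_def p_def[symmetric]
  by (intro nn_integral_cong) (simp add: ennreal_mult ln_inverse_p_nonneg)

lemma integral_ln_inverse_p:
  assumes "discrete_entropy M W \<noteq> \<infinity>"
  shows "integrable M (\<lambda>\<omega>. ln (1 / p (W \<omega>)))"
    and "(\<integral>\<omega>. ln (1 / p (W \<omega>)) \<partial>M) = enn2real (discrete_entropy M W)"
proof -
  show int: "integrable M (\<lambda>\<omega>. ln (1 / p (W \<omega>)))"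
    using assms by (intro integrableI_nonneg)
      (auto simp: ln_inverse_p_nonneg discrete_entropy_eq_nn_integral top.not_eq_extremum)
  show "(\<integral>\<omega>. ln (1 / p (W \<omega>)) \<partial>M) = enn2real (discrete_entropy M W)"
    using nn_integral_eq_integral[OF int] ln_inverse_p_nonneg
    by (simp add: discrete_entropy_eq_nn_integral integral_nonneg_AE)
qed

lemma discrete_entropy_le_ln_card_support:
  assumes fin: "finite (support_rv M W)"
  shows "discrete_entropy M W \<le> ennreal (ln (real (card (support_rv M W))))"
proof -
  let ?K = "support_rv M W"
  have K: "?K = {w. 0 < p w}" by (simp add: support_rv_def p_def)
  have off: "p w = 0" if "w \<notin> ?K" for w using that by (auto simp: K p_def less_le)
  have "1 = (\<Sum>w\<in>?K. ennreal (p w))"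
    using nn_integral_p nn_integral_count_space'[OF fin, where f = "\<lambda>w. ennreal (p w)" and B = UNIV] off
    by simp
  then have sum1: "(\<Sum>w\<in>?K. p w) = 1"
    by (metis ennreal_1 ennreal_inj p_nonneg sum_ennreal sum_nonneg zero_le_one)
  have "discrete_entropy M W = (\<Sum>w\<in>?K. ennreal (p w * ln (1 / p w)))"
    unfolding discrete_entropy_def p_def[symmetric]
    by (rule nn_integral_count_space'[OF fin]) (auto simp: off)
  also have "\<dots> = ennreal (\<Sum>w\<in>?K. p w * ln (1 / p w))"
    by (rule sum_ennreal) (simp add: ln_inverse_p_nonneg)
  also have "\<dots> \<le> ennreal (ln (real (card ?K)))"
    using entropy_sum_le_ln_card[OF fin _ sum1] by (simp add: K ennreal_leI)
  finally show ?thesis .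
qed

end

locale gaussian_discrete_pair = discrete_random_variable M W
  for M :: "'a measure" and W :: "'a \<Rightarrow> 'w" +
  fixes Z :: "'a \<Rightarrow> real^'d"
  assumes std_normal_Z: "distributed M lborel Z (\<lambda>x. ennreal (\<Prod>i\<in>UNIV. std_normal_density (x $ i)))"
begin

lemma measurable_Z [measurable]: "Z \<in> borel_measurable M"
  using distributed_measurable[OF std_normal_Z] by simp

lemma measurable_Z_nth [measurable]: "(\<lambda>\<omega>. Z \<omega> $ i) \<in> borel_measurable M"
  using measurable_Z by (rule measurable_compose)
    (intro borel_measurable_continuous_onI continuous_intros)

lemma integrable_exp_Z_nth: "integrable M (\<lambda>\<omega>. exp (c * Z \<omega> $ i))"
proof (rule integrableI_nonneg)
  define a :: "real^'d" where "a = c *\<^sub>R axis i 1"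
  have "(\<integral>\<^sup>+\<omega>. ennreal (exp (c * Z \<omega> $ i)) \<partial>M)
      = (\<integral>\<^sup>+\<omega>. ennreal (exp (a \<bullet> a / 2)) * ennreal (exp (a \<bullet> Z \<omega> - a \<bullet> a / 2)) \<partial>M)"
    by (intro nn_integral_cong) (simp add: a_def inner_axis' ennreal_mult[symmetric] exp_add[symmetric])
  also have "\<dots> = ennreal (exp (a \<bullet> a / 2))"
    using nn_integral_std_normal_exp_tilt[OF prob_space_axioms std_normal_Z, of a]
    by (simp add: nn_integral_cmult)
  finally show "(\<integral>\<^sup>+\<omega>. ennreal (exp (c * Z \<omega> $ i)) \<partial>M) < \<infinity>" by simp
qed auto

lemma integrable_Z_nth_square: "integrable M (\<lambda>\<omega>. (Z \<omega> $ i)\<^sup>2)"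
proof (rule Bochner_Integration.integrable_bound)
  show "integrable M (\<lambda>\<omega>. 2 * (exp (1 * Z \<omega> $ i) + exp ((-1) * Z \<omega> $ i)))"
    using integrable_exp_Z_nth[of 1 i] integrable_exp_Z_nth[of "-1" i] by simp
  have "t\<^sup>2 \<le> 2 * (exp t + exp (-t))" for t :: real
  proof -
    have "1 + \<bar>t\<bar> + \<bar>t\<bar>\<^sup>2 / 2 \<le> exp \<bar>t\<bar>" by (rule exp_lower_Taylor_quadratic) simp
    moreover have "exp \<bar>t\<bar> \<le> exp t + exp (-t)" by (cases "t \<ge> 0") auto
    ultimately show ?thesis by simp
  qed
  then show "AE \<omega> in M. norm ((Z \<omega> $ i)\<^sup>2) \<le> norm (2 * (exp (1 * Z \<omega> $ i) + exp ((-1) * Z \<omega> $ i)))"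
    by (simp add: add_pos_pos)
qed measurable

lemma integrable_Z_nth: "integrable M (\<lambda>\<omega>. Z \<omega> $ i)"
  by (rule square_integrable_imp_integrable[OF _ integrable_Z_nth_square]) measurable

lemma nn_integral_exp_tilt_le_1:
  fixes g :: "'w \<Rightarrow> real^'d"
  shows "(\<integral>\<^sup>+\<omega>. ennreal (exp (g (W \<omega>) \<bullet> Z \<omega> - g (W \<omega>) \<bullet> g (W \<omega>) / 2 - ln (1 / p (W \<omega>)))) \<partial>M) \<le> 1"
proof -
  define tilt where "tilt w \<omega> = ennreal (exp (g w \<bullet> Z \<omega> - g w \<bullet> g w / 2))" for w \<omega>
  have [measurable]: "tilt w \<in> borel_measurable M" for w unfolding tilt_def by measurable
  have fibre: "(\<integral>\<^sup>+\<omega>. ennreal (exp (g w \<bullet> Z \<omega> - g w \<bullet> g w / 2 - ln (1 / p w)))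
                     * indicator {\<omega>\<in>space M. W \<omega> = w} \<omega> \<partial>M) \<le> ennreal (p w)" for w
  proof (cases "p w = 0")
    case True
    \<comment> \<open>Here \<open>ln (1 / 0) = 0\<close>, so it is the nullity of the fibre, not the integrand, that helps.\<close>
    then have "{\<omega>\<in>space M. W \<omega> = w} \<in> null_sets M"
      by (simp add: p_def null_sets_def emeasure_eq_measure)
    then have "AE \<omega> in M. \<omega> \<notin> {\<omega>\<in>space M. W \<omega> = w}" by (rule AE_not_in)
    then have "AE \<omega> in M. ennreal (exp (g w \<bullet> Z \<omega> - g w \<bullet> g w / 2 - ln (1 / p w)))
                     * indicator {\<omega>\<in>space M. W \<omega> = w} \<omega> = 0"
      by eventually_elim simp
    then have "(\<integral>\<^sup>+\<omega>. ennreal (exp (g w \<bullet> Z \<omega> - g w \<bullet> g w / 2 - ln (1 / p w)))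
                     * indicator {\<omega>\<in>space M. W \<omega> = w} \<omega> \<partial>M) = (\<integral>\<^sup>+\<omega>. 0 \<partial>M)"
      by (rule nn_integral_cong_AE)
    then show ?thesis by simp
  next
    case False
    then have p_pos: "0 < p w" by (simp add: p_def less_le)
    have "(\<integral>\<^sup>+\<omega>. ennreal (exp (g w \<bullet> Z \<omega> - g w \<bullet> g w / 2 - ln (1 / p w)))
                  * indicator {\<omega>\<in>space M. W \<omega> = w} \<omega> \<partial>M)
        \<le> (\<integral>\<^sup>+\<omega>. ennreal (p w) * tilt w \<omega> \<partial>M)"
      using p_pos by (intro nn_integral_mono)
        (auto simp: tilt_def indicator_def exp_diff ennreal_mult[symmetric] mult.commute)
    also have "\<dots> = ennreal (p w)"
      using nn_integral_std_normal_exp_tilt[OF prob_space_axioms std_normal_Z, of "g w"]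
      by (simp add: nn_integral_cmult tilt_def)
    finally show ?thesis .
  qed
  have "(\<integral>\<^sup>+\<omega>. ennreal (exp (g (W \<omega>) \<bullet> Z \<omega> - g (W \<omega>) \<bullet> g (W \<omega>) / 2 - ln (1 / p (W \<omega>)))) \<partial>M)
      \<le> (\<integral>\<^sup>+w. ennreal (p w) \<partial>count_space UNIV)"
    by (subst nn_integral_split_by_value[where f = "\<lambda>w \<omega>. ennreal (exp (g w \<bullet> Z \<omega> - g w \<bullet> g w / 2 - ln (1 / p w)))"])
      (auto intro!: nn_integral_mono fibre)
  then show ?thesis by (simp add: nn_integral_p)
qed

lemma gaussian_tilt_expectation_le_entropy:
  fixes g :: "'w \<Rightarrow> real^'d"
  assumes fin: "discrete_entropy M W \<noteq> \<infinity>"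
    and int_gZ: "integrable M (\<lambda>\<omega>. g (W \<omega>) \<bullet> Z \<omega>)"
    and int_gg: "integrable M (\<lambda>\<omega>. g (W \<omega>) \<bullet> g (W \<omega>))"
  shows "(\<integral>\<omega>. g (W \<omega>) \<bullet> Z \<omega> \<partial>M) - (\<integral>\<omega>. g (W \<omega>) \<bullet> g (W \<omega>) \<partial>M) / 2
           \<le> enn2real (discrete_entropy M W)"
proof -
  note L = integral_ln_inverse_p[OF fin]
  have "(\<integral>\<omega>. g (W \<omega>) \<bullet> Z \<omega> - g (W \<omega>) \<bullet> g (W \<omega>) / 2 - ln (1 / p (W \<omega>)) \<partial>M) \<le> 0"
    using int_gZ int_gg L(1) nn_integral_exp_tilt_le_1[of g]
    by (intro integral_nonpos_if_nn_integral_exp_le_1) auto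
  then show ?thesis using int_gZ int_gg L by simp
qed

definition Y :: "'d \<Rightarrow> 'a \<Rightarrow> real" where
  "Y i = real_cond_exp M (sigma_of M W) (\<lambda>\<omega>. Z \<omega> $ i)"

lemma cond_exp_vec_nth: "cond_exp_vec M W Z \<omega> $ i = Y i \<omega>"
  by (simp add: cond_exp_vec_def Y_def)

lemma sigma_finite_subalgebra_sigma_of: "sigma_finite_subalgebra M (sigma_of M W)"
proof (rule finite_measure_subalgebra_is_sigma_finite)
  have "subalgebra M (sigma_of M W)"
    unfolding subalgebra_def sets_sigma_of by (auto simp: sigma_of_def)
  then show "finite_measure_subalgebra M (sigma_of M W)"
    by (simp add: finite_measure_subalgebra_def finite_measure_subalgebra_axioms_def finite_measure_axioms)
qed

interpretation cond: sigma_finite_subalgebra M "sigma_of M W"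
  by (rule sigma_finite_subalgebra_sigma_of)

lemma measurable_Y_sigma_of [measurable]: "Y i \<in> borel_measurable (sigma_of M W)"
  unfolding Y_def by (rule borel_measurable_cond_exp)

lemma measurable_Y [measurable]: "Y i \<in> borel_measurable M"
  by (rule measurable_from_subalg[OF cond.subalg measurable_Y_sigma_of])

lemma integrable_Y_square: "integrable M (\<lambda>\<omega>. (Y i \<omega>)\<^sup>2)"
proof (rule Bochner_Integration.integrable_bound)
  show "integrable M (real_cond_exp M (sigma_of M W) (\<lambda>\<omega>. (Z \<omega> $ i)\<^sup>2))"
    by (rule cond.real_cond_exp_int(1)[OF integrable_Z_nth_square])
  have "AE \<omega> in M. (Y i \<omega>)\<^sup>2 \<le> real_cond_exp M (sigma_of M W) (\<lambda>\<omega>. (Z \<omega> $ i)\<^sup>2) \<omega>"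
    using cond.real_cond_exp_jensens_inequality(2)[OF integrable_Z_nth[of i],
        where I = UNIV and q = power2, OF _ _ _ convex_power2] integrable_Z_nth_square[of i]
    by (auto simp: Y_def)
  moreover have "AE \<omega> in M. 0 \<le> real_cond_exp M (sigma_of M W) (\<lambda>\<omega>. (Z \<omega> $ i)\<^sup>2) \<omega>"
    by (rule cond.real_cond_exp_pos) (auto intro: integrable_Z_nth_square)
  ultimately show "AE \<omega> in M. norm ((Y i \<omega>)\<^sup>2) \<le> norm (real_cond_exp M (sigma_of M W) (\<lambda>\<omega>. (Z \<omega> $ i)\<^sup>2) \<omega>)"
    by eventually_elim auto
qed measurable

lemma integrable_Y: "integrable M (Y i)"
  by (rule square_integrable_imp_integrable[OF _ integrable_Y_square]) measurable

lemma integrable_Y_mult_Z_nth: "integrable M (\<lambda>\<omega>. Y i \<omega> * Z \<omega> $ i)"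
proof (rule Bochner_Integration.integrable_bound)
  show "integrable M (\<lambda>\<omega>. (Y i \<omega>)\<^sup>2 + (Z \<omega> $ i)\<^sup>2)"
    using integrable_Y_square[of i] integrable_Z_nth_square[of i] by simp
  have "\<bar>u * v\<bar> \<le> u\<^sup>2 + v\<^sup>2" for u v :: real
  proof -
    have "0 \<le> (\<bar>u\<bar> - \<bar>v\<bar>)\<^sup>2" by simp
    then have "2 * (\<bar>u\<bar> * \<bar>v\<bar>) \<le> u\<^sup>2 + v\<^sup>2"
      by (simp add: power2_eq_square algebra_simps abs_mult_self_eq)
    moreover have "0 \<le> \<bar>u\<bar> * \<bar>v\<bar>" by simp
    ultimately show ?thesis unfolding abs_mult by linarith
  qed
  then show "AE \<omega> in M. norm (Y i \<omega> * Z \<omega> $ i) \<le> norm ((Y i \<omega>)\<^sup>2 + (Z \<omega> $ i)\<^sup>2)" by simp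
qed measurable

lemma second_moment_Y: "(\<integral>\<omega>. (Y i \<omega>)\<^sup>2 \<partial>M) = (\<integral>\<omega>. Y i \<omega> * Z \<omega> $ i \<partial>M)"
  using cond.real_cond_exp_intg(2)[OF integrable_Y_mult_Z_nth measurable_Y_sigma_of measurable_Z_nth]
  by (simp add: Y_def power2_eq_square)

lemma cond_exp_vec_factors_through_W:
  obtains g :: "'w \<Rightarrow> real^'d" where "\<And>\<omega>. \<omega> \<in> space M \<Longrightarrow> cond_exp_vec M W Z \<omega> = g (W \<omega>)"
proof -
  define g where "g w = cond_exp_vec M W Z (SOME \<omega>. \<omega> \<in> space M \<and> W \<omega> = w)" for w
  have "cond_exp_vec M W Z \<omega> = g (W \<omega>)" if \<omega>: "\<omega> \<in> space M" for \<omega>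
  proof -
    define \<omega>' where "\<omega>' = (SOME \<omega>'. \<omega>' \<in> space M \<and> W \<omega>' = W \<omega>)"
    have \<omega>': "\<omega>' \<in> space M \<and> W \<omega>' = W \<omega>" unfolding \<omega>'_def by (rule someI[of _ \<omega>]) (simp add: \<omega>)
    then show ?thesis
      unfolding g_def \<omega>'_def[symmetric] using \<omega>
      by (auto simp: vec_eq_iff cond_exp_vec_nth
          intro: measurable_sigma_of_constant_on_fibres[OF measurable_Y_sigma_of])
  qed
  then show thesis by (rule that)
qed

lemma sum_second_moments_Y_le_entropy:
  assumes fin: "discrete_entropy M W \<noteq> \<infinity>"
  shows "(\<Sum>i\<in>UNIV. \<integral>\<omega>. (Y i \<omega>)\<^sup>2 \<partial>M) \<le> 2 * enn2real (discrete_entropy M W)"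
proof -
  obtain g where g: "\<And>\<omega>. \<omega> \<in> space M \<Longrightarrow> cond_exp_vec M W Z \<omega> = g (W \<omega>)"
    using cond_exp_vec_factors_through_W by blast
  have gZ: "g (W \<omega>) \<bullet> Z \<omega> = (\<Sum>i\<in>UNIV. Y i \<omega> * Z \<omega> $ i)"
    and gg: "g (W \<omega>) \<bullet> g (W \<omega>) = (\<Sum>i\<in>UNIV. (Y i \<omega>)\<^sup>2)" if "\<omega> \<in> space M" for \<omega>
    using g[OF that, symmetric] by (simp_all add: inner_vec_def cond_exp_vec_nth power2_eq_square)
  have int_gZ: "integrable M (\<lambda>\<omega>. g (W \<omega>) \<bullet> Z \<omega>)"
    by (subst Bochner_Integration.integrable_cong[OF refl gZ])
      (blast, intro Bochner_Integration.integrable_sum integrable_Y_mult_Z_nth)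
  have int_gg: "integrable M (\<lambda>\<omega>. g (W \<omega>) \<bullet> g (W \<omega>))"
    by (subst Bochner_Integration.integrable_cong[OF refl gg])
      (blast, intro Bochner_Integration.integrable_sum integrable_Y_square)
  have "(\<integral>\<omega>. g (W \<omega>) \<bullet> Z \<omega> \<partial>M) = (\<Sum>i\<in>UNIV. \<integral>\<omega>. (Y i \<omega>)\<^sup>2 \<partial>M)"
    by (subst Bochner_Integration.integral_cong[OF refl gZ])
      (simp_all add: Bochner_Integration.integral_sum integrable_Y_mult_Z_nth second_moment_Y)
  moreover have "(\<integral>\<omega>. g (W \<omega>) \<bullet> g (W \<omega>) \<partial>M) = (\<Sum>i\<in>UNIV. \<integral>\<omega>. (Y i \<omega>)\<^sup>2 \<partial>M)"
    by (subst Bochner_Integration.integral_cong[OF refl gg])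
      (simp_all add: Bochner_Integration.integral_sum integrable_Y_square)
  ultimately show ?thesis
    using gaussian_tilt_expectation_le_entropy[OF fin int_gZ int_gg] by simp
qed

lemma lambda_min_cov_cond_exp_le_entropy:
  assumes "discrete_entropy M W \<noteq> \<infinity>"
  shows "real CARD('d) * lambda_min (cov_matrix M (cond_exp_vec M W Z))
           \<le> 2 * enn2real (discrete_entropy M W)"
proof -
  let ?C = "cov_matrix M (cond_exp_vec M W Z)"
  have "transpose ?C = ?C" by (simp add: cov_matrix_def transpose_def vec_eq_iff mult.commute)
  have "lambda_min ?C \<le> (\<integral>\<omega>. (Y i \<omega>)\<^sup>2 \<partial>M)" for i
  proof -
    have "lambda_min ?C \<le> ?C $ i $ i" by (rule lambda_min_le_diagonal) fact
    also have "\<dots> \<le> (\<integral>\<omega>. (Y i \<omega>)\<^sup>2 \<partial>M)"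
      using variance_le_second_moment[OF integrable_Y integrable_Y_square]
      by (simp add: cov_matrix_def cond_exp_vec_nth power2_eq_square)
    finally show ?thesis .
  qed
  then have "(\<Sum>i\<in>(UNIV::'d set). lambda_min ?C) \<le> (\<Sum>i\<in>UNIV. \<integral>\<omega>. (Y i \<omega>)\<^sup>2 \<partial>M)"
    by (rule sum_mono)
  then show ?thesis using sum_second_moments_Y_le_entropy[OF assms] by simp
qed

end

theorem mainTheorem5:
  fixes M :: "'a measure" and Z :: "'a \<Rightarrow> real^'d" and W :: "'a \<Rightarrow> 'w"
  assumes "prob_space M"
    and "distributed M lborel Z (\<lambda>x. ennreal (\<Prod>i\<in>UNIV. std_normal_density (x $ i)))"
    and "W \<in> measurable M (count_space UNIV)"
    and "countable (W ` space M)"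
    and "\<And>w. measure M {\<omega>\<in>space M. W \<omega> = w} < 1/2"
  shows "ereal (lambda_min (cov_matrix M (cond_exp_vec M W Z)))
           \<le> ereal (37 / real CARD('d)) * enn2ereal (discrete_entropy M W)
         \<and> (finite (support_rv M W) \<longrightarrow>
             lambda_min (cov_matrix M (cond_exp_vec M W Z))
               \<le> 37 / real CARD('d) * ln (real (card (support_rv M W))))"
proof -
  interpret gaussian_discrete_pair M W Z
    using assms(1-4) by (simp add: gaussian_discrete_pair_def gaussian_discrete_pair_axioms_def
        discrete_random_variable_def discrete_random_variable_axioms_def)
  define lmin where "lmin = lambda_min (cov_matrix M (cond_exp_vec M W Z))"
  define d where "d = real CARD('d)"
  have d: "0 < d" by (simp add: d_def)
  show ?thesis
  proof (cases "discrete_entropy M W" rule: ennreal_cases)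
    case (real H)
    then have "d * lmin \<le> 2 * H"
      using lambda_min_cov_cond_exp_le_entropy by (simp add: lmin_def d_def)
    then have lmin_le: "lmin \<le> 37 / d * H" using d \<open>0 \<le> H\<close> by (simp add: field_simps)
    moreover have "lmin \<le> 37 / d * ln (real (card (support_rv M W)))" if "finite (support_rv M W)"
    proof -
      have "0 \<le> ln (real (card (support_rv M W)))" by (cases "card (support_rv M W)") auto
      then have "H \<le> ln (real (card (support_rv M W)))"
        using discrete_entropy_le_ln_card_support[OF that] real by simp
      then show ?thesis using lmin_le d by (smt (verit) mult_left_mono divide_nonneg_pos)
    qed
    ultimately show ?thesis using real by (simp add: lmin_def d_def)
  next
    case top
    then have "infinite (support_rv M W)"
      using discrete_entropy_le_ln_card_support by (auto simp: top_unique)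
    then show ?thesis using top d by (simp add: d_def)
  qed
qed

end
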